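(* Let $X$ be any real random variable, and let $s_1,s_2$ be real numbers with $s_1\le 0\le s_2$ such that $\mathsf{E}\, e^{sX}<\infty$ for all $s\in[s_1,s_2]$. Let $p\in\mathbb{N}$ with $\mathsf{E}|X|^p<\infty$, and let $\ell:=p-1$. Then for any $s\in[s_1,0)$ and any $j\in\{-1,0,\dots,\ell\}$, \[ \mathsf{E}\, X_+^p=\mathsf{E}\, X^p+\frac{p!}{2\pi}\int_{-\infty}^{\infty}\frac{\mathsf{E}\, e_j\big((s+it)X\big)}{(s+it)^{p+1}}\,dt =\mathsf{E}\, X^p+\frac{p!}{\pi}\int_{0}^{\infty}\operatorname{Re}\frac{\mathsf{E}\, e_j\big((s+it)X\big)}{(s+it)^{p+1}}\,dt, \] where the integrals exist in the Lebesgue sense.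
   Context: $x_+:=\max(0,x)$, $x_+^p:=(x_+)^p$. For complex $z$ and $m\in\{-1,0,1,\dots\}$, $e_m(z):=e^z-\sum_{j=0}^m z^j/j!$ (an empty sum is $0$, so $e_{-1}(z)=e^z$). The statement of the identity includes the assertion that the integrals exist in the Lebesgue sense (possibly infinite). *)

theory Defs
  imports "HOL-Probability.Probability"
begin

text \<open>Truncated exponential: e_m(z) = exp z - sum_{k=0}^{m} z^k/k!, for integer m \<ge> -1
  (for m = -1 the sum is empty, so e_{-1} = exp).\<close>
definition exp_trunc :: "int \<Rightarrow> complex \<Rightarrow> complex" where
  "exp_trunc m z = exp z - (\<Sum>k<nat (m + 1). z ^ k / of_nat (fact k))"

end

theory Submission
  imports Defs "HOL-Complex_Analysis.Complex_Analysis" "HOL-Real_Asymp.Real_Asymp"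
begin

text \<open>
  For \<open>\<sigma> \<noteq> 0\<close> the kernel \<open>exp (z x) / z^(p+1)\<close> is integrable along the line \<open>Re z = \<sigma>\<close>.
  It is an entire function plus the principal part \<open>\<Sum>k\<le>p. x^k/k! \<cdot> z^(k-p-1)\<close>. By Cauchy's
  theorem on long rectangles the entire part does not change the line integral when \<open>\<sigma>\<close>
  moves, the powers \<open>z^(-m)\<close> with \<open>m \<ge> 2\<close> integrate to \<open>0\<close> and \<open>1/z\<close> integrates to \<open>\<pi> sgn \<sigma>\<close>;
  so the line integral jumps by \<open>2\<pi> x^p/p!\<close> when \<open>\<sigma>\<close> crosses \<open>0\<close>. As it is bounded by
  \<open>\<pi> exp (\<sigma> x) / |\<sigma>|\<close>, it vanishes for \<open>\<sigma> < 0\<close> if \<open>x \<ge> 0\<close> and for \<open>\<sigma> > 0\<close> if \<open>x < 0\<close>. This gives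
  the value \<open>2\<pi>/p! \<cdot> (x\<^sub>+^p - x^p)\<close> on every line \<open>\<sigma> < 0\<close>, and passing from \<open>exp\<close> to \<open>e\<^sub>j\<close> only
  subtracts further powers \<open>z^(-m)\<close> with \<open>m \<ge> 2\<close>. The exponential moment at \<open>s\<close> and the
  moments up to order \<open>p\<close> make the integrand integrable on the product space, so Fubini's
  theorem gives the first identity; the second holds because the integrand at \<open>-t\<close> is the
  complex conjugate of the integrand at \<open>t\<close>.
\<close>

lemma continuous_on_Complex: "continuous_on A (Complex s)"
  unfolding Complex_eq by (intro continuous_intros)

lemma has_vector_derivative_Complex: "((\<lambda>t. Complex s t) has_vector_derivative \<i>) (at t)"
proof -
  have "((\<lambda>t. of_real s + of_real t * \<i>) has_vector_derivative (0 + of_real 1 * \<i>)) (at t)"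
    by (intro has_vector_derivative_add has_vector_derivative_const has_vector_derivative_mult_left
        has_vector_derivative_of_real[OF DERIV_ident])
  then show ?thesis by (simp add: Complex_eq mult.commute)
qed

lemma norm_Complex_power2: "norm (Complex s t) ^ 2 = s\<^sup>2 + t\<^sup>2"
  by (simp add: cmod_def)

lemma abs_le_norm_Complex: "\<bar>s\<bar> \<le> norm (Complex s t)" "\<bar>t\<bar> \<le> norm (Complex s t)"
  using abs_Re_le_cmod[of "Complex s t"] abs_Im_le_cmod[of "Complex s t"] by auto

lemma Complex_neq_0: "s \<noteq> 0 \<Longrightarrow> Complex s t \<noteq> 0"
  by (simp add: complex_eq_iff)

lemma continuous_on_vertical:
  "continuous_on (-{0}) f \<Longrightarrow> \<sigma> \<noteq> 0 \<Longrightarrow> continuous_on A (\<lambda>t. f (Complex \<sigma> t))"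
  by (rule continuous_on_compose2[OF _ continuous_on_Complex]) (auto simp: complex_eq_iff)

lemma borel_measurable_vertical:
  "continuous_on (-{0}) f \<Longrightarrow> \<sigma> \<noteq> 0 \<Longrightarrow> (\<lambda>t. f (Complex \<sigma> t)) \<in> borel_measurable lborel"
  using borel_measurable_continuous_onI[OF continuous_on_vertical] by simp

lemma integrable_on_vertical:
  fixes f :: "complex \<Rightarrow> complex"
  shows "continuous_on (-{0}) f \<Longrightarrow> \<sigma> \<noteq> 0 \<Longrightarrow> (\<lambda>t. f (Complex \<sigma> t)) integrable_on {a..b}"
  by (intro integrable_continuous_interval) (rule continuous_on_vertical)

lemma divide_power_eq_inverse_power:
  "(z::'a::field) \<noteq> 0 \<Longrightarrow> k \<le> m \<Longrightarrow> z ^ k / z ^ m = inverse z ^ (m - k)"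
  by (simp add: power_diff power_inverse divide_inverse)

lemma norm_inverse_power_le:
  fixes z :: "'a::real_normed_div_algebra"
  assumes "m \<ge> 1" "norm z \<ge> T" "T \<ge> 1"
  shows "norm (inverse z ^ m) \<le> 1 / T"
proof -
  have "norm z \<le> norm z ^ m"
    using assms by (simp add: power_increasing[of 1 m "norm z", simplified])
  then have "inverse (norm z ^ m) \<le> inverse T"
    using assms by (intro le_imp_inverse_le) auto
  then show ?thesis by (simp add: norm_power norm_inverse power_inverse divide_inverse)
qed

lemma eq_0_if_norm_le_div_Suc:
  fixes a :: "'a::real_normed_vector"
  assumes "\<And>n::nat. norm a \<le> c / (real n + 1)"
  shows "a = 0"
proof -
  have "(\<lambda>n::nat. c / (real n + 1)) \<longlonglongrightarrow> 0" by real_asymp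
  then have "norm a \<le> 0" by (rule LIMSEQ_le_const) (use assms in auto)
  then show ?thesis by simp
qed

subsection \<open>Integrals over the real line\<close>

lemma
  assumes "\<sigma> \<noteq> 0"
  shows integrable_inverse_sum_squares: "integrable lborel (\<lambda>t. 1 / (\<sigma>\<^sup>2 + t\<^sup>2))"
    and integral_inverse_sum_squares: "(\<integral>t. 1 / (\<sigma>\<^sup>2 + t\<^sup>2) \<partial>lborel) = pi / \<bar>\<sigma>\<bar>"
proof -
  let ?f = "\<lambda>x::real. inverse (1 + x\<^sup>2)"
  have int1: "integrable lborel ?f"
    using integrable_inverse_1_plus_square by (simp add: set_integrable_def)
  have val1: "(\<integral>x. ?f x \<partial>lborel) = pi"
    using LBINT_inverse_1_plus_square
    by (simp add: interval_lebesgue_integral_def set_lebesgue_integral_def)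
  have c: "1 / \<bar>\<sigma>\<bar> \<noteq> 0" using assms by simp
  have int2: "integrable lborel (\<lambda>t. ?f (0 + (1 / \<bar>\<sigma>\<bar>) * t))"
    using lborel_integrable_real_affine[OF int1 c] .
  have scaled: "?f (0 + (1 / \<bar>\<sigma>\<bar>) * t) = \<sigma>\<^sup>2 * (1 / (\<sigma>\<^sup>2 + t\<^sup>2))" for t
    using assms by (simp add: field_simps power2_eq_square abs_mult_self_eq)
  show "integrable lborel (\<lambda>t. 1 / (\<sigma>\<^sup>2 + t\<^sup>2))"
    using int2 assms unfolding scaled by (simp only: integrable_mult_left_iff) simp
  have "pi = \<bar>1 / \<bar>\<sigma>\<bar>\<bar> * (\<integral>t. ?f (0 + (1 / \<bar>\<sigma>\<bar>) * t) \<partial>lborel)"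
    using lborel_integral_real_affine[OF c, of ?f 0] val1 by simp
  also have "\<dots> = \<bar>\<sigma>\<bar> * (\<integral>t. 1 / (\<sigma>\<^sup>2 + t\<^sup>2) \<partial>lborel)"
    unfolding scaled using assms
    by (simp only: integral_mult_right_zero) (simp add: power2_eq_square field_simps)
  finally show "(\<integral>t. 1 / (\<sigma>\<^sup>2 + t\<^sup>2) \<partial>lborel) = pi / \<bar>\<sigma>\<bar>"
    using assms by (simp add: field_simps)
qed

lemma tendsto_integral_symmetric_intervals:
  fixes g :: "real \<Rightarrow> 'a::euclidean_space"
  assumes "integrable lborel g"
  shows "(\<lambda>n::nat. integral {-real n..real n} g) \<longlonglongrightarrow> (\<integral>t. g t \<partial>lborel)"
proof -
  have int_n: "set_integrable lborel {-real n..real n} g" for n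
    using assms unfolding set_integrable_def by (intro integrable_mult_indicator) auto
  have eq: "integral {-real n..real n} g = (\<integral>t. indicator {-real n..real n} t *\<^sub>R g t \<partial>lborel)" for n
    using set_borel_integral_eq_integral(2)[OF int_n[of n]] by (simp add: set_lebesgue_integral_def)
  show ?thesis unfolding eq
  proof (rule integral_dominated_convergence[where w="\<lambda>t. norm (g t)"])
    show "AE t in lborel. (\<lambda>n. indicator {-real n..real n} t *\<^sub>R g t) \<longlonglongrightarrow> g t"
    proof (intro AE_I2 tendsto_eventually)
      fix t :: real
      obtain N :: nat where "\<bar>t\<bar> \<le> real N" using real_arch_simple by blast
      then show "\<forall>\<^sub>F n in sequentially. indicator {-real n..real n} t *\<^sub>R g t = g t"
        by (intro eventually_sequentiallyI[of N]) (auto simp: indicator_def)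
    qed
    show "AE t in lborel. norm (indicator {-real n..real n} t *\<^sub>R g t) \<le> norm (g t)" for n
      by (intro AE_I2) (auto simp: indicator_def)
  qed (use assms in auto)
qed

lemma lborel_integral_even:
  fixes f :: "real \<Rightarrow> real"
  assumes f: "integrable lborel f" and even: "\<And>t. f (- t) = f t"
  shows "set_integrable lborel {0..} f"
    and "(\<integral>t. f t \<partial>lborel) = 2 * (LINT t:{0..}|lborel. f t)"
proof -
  have int_pos: "integrable lborel (\<lambda>t. indicator {0..} t * f t)"
    using integrable_mult_indicator[of "{0..}" lborel f] f by simp
  have int_neg: "integrable lborel (\<lambda>t. indicator {..<0} t * f t)"
    using integrable_mult_indicator[of "{..<0}" lborel f] f by simp
  from int_pos show "set_integrable lborel {0..} f"
    by (simp add: set_integrable_def)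
  have "(\<integral>t. f t \<partial>lborel) = (\<integral>t. indicator {0..} t * f t + indicator {..<0} t * f t \<partial>lborel)"
    by (intro Bochner_Integration.integral_cong) (auto simp: indicator_def)
  also have "\<dots> = (\<integral>t. indicator {0..} t * f t \<partial>lborel) + (\<integral>t. indicator {..<0} t * f t \<partial>lborel)"
    by (rule Bochner_Integration.integral_add[OF int_pos int_neg])
  also have "(\<integral>t. indicator {..<0} t * f t \<partial>lborel)
      = (\<integral>t. indicator {..<0} (0 + (-1) * t) * f (0 + (-1) * t) \<partial>lborel)"
    using lborel_integral_real_affine[of "-1" "\<lambda>t. indicator {..<0} t * f t" 0] by simp
  also have "\<dots> = (\<integral>t. indicator {0..} t * f t \<partial>lborel)"
  proof (rule integral_cong_AE)
    show "(\<lambda>t. indicator {..<0} (0 + (-1) * t) * f (0 + (-1) * t)) \<in> borel_measurable lborel"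
      using f by measurable
    show "(\<lambda>t. indicator {0..} t * f t) \<in> borel_measurable lborel"
      using f by measurable
    show "AE t in lborel. indicator {..<0} (0 + (-1) * t) * f (0 + (-1) * t) = indicator {0..} t * f t"
      using AE_lborel_singleton[of "0::real"] by eventually_elim (auto simp: indicator_def even)
  qed
  finally show "(\<integral>t. f t \<partial>lborel) = 2 * (LINT t:{0..}|lborel. f t)"
    unfolding set_lebesgue_integral_def by simp
qed

subsection \<open>Contour integrals around rectangles\<close>

lemma has_contour_integral_vertical_linepath:
  fixes f :: "complex \<Rightarrow> complex"
  assumes "a < b" and "((\<lambda>t. f (Complex \<sigma> t)) has_integral J) {a..b}"
  shows "(f has_contour_integral (\<i> * J)) (linepath (Complex \<sigma> a) (Complex \<sigma> b))"
proof -
  let ?F = "\<lambda>t. f (Complex \<sigma> t)"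
  have "((\<lambda>x. ?F ((b - a) *\<^sub>R x + a)) has_integral (J /\<^sub>R (b - a) ^ DIM(real)))
          (cbox ((a - a) /\<^sub>R (b - a)) ((b - a) /\<^sub>R (b - a)))"
    using has_integral_affinity_iff[where m="b - a" and f="?F" and I=J and c=a and a=a and b=b] assms by simp
  then have "((\<lambda>x. ?F ((b - a) * x + a)) has_integral (J /\<^sub>R (b - a))) {0..1}"
    using assms by simp
  from has_integral_mult_left[OF this, of "\<i> * of_real (b - a)"]
  have "((\<lambda>x. ?F ((b - a) * x + a) * (\<i> * of_real (b - a))) has_integral
          (J /\<^sub>R (b - a)) * (\<i> * of_real (b - a))) {0..1}" .
  moreover have "(J /\<^sub>R (b - a)) * (\<i> * of_real (b - a)) = \<i> * J"
    using assms by (simp add: scaleR_conv_of_real field_simps)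
  moreover have "linepath (Complex \<sigma> a) (Complex \<sigma> b) x = Complex \<sigma> ((b - a) * x + a)" for x
    by (simp add: linepath_def complex_eq_iff algebra_simps scaleR_conv_of_real)
  moreover have "Complex \<sigma> b - Complex \<sigma> a = \<i> * of_real (b - a)"
    by (simp add: complex_eq_iff)
  ultimately show ?thesis
    unfolding has_contour_integral_linepath by simp
qed

lemma contour_integral_vertical_linepath:
  fixes f :: "complex \<Rightarrow> complex"
  assumes "a < b" and "continuous_on UNIV f"
  shows "contour_integral (linepath (Complex \<sigma> a) (Complex \<sigma> b)) f
           = \<i> * integral {a..b} (\<lambda>t. f (Complex \<sigma> t))"
proof -
  have "continuous_on {a..b} (\<lambda>t. f (Complex \<sigma> t))"
    by (intro continuous_on_compose2[OF assms(2) continuous_on_Complex]) auto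
  then have "((\<lambda>t. f (Complex \<sigma> t)) has_integral integral {a..b} (\<lambda>t. f (Complex \<sigma> t))) {a..b}"
    by (intro integrable_integral integrable_continuous_interval)
  from has_contour_integral_vertical_linepath[OF assms(1) this] show ?thesis
    by (rule contour_integral_unique)
qed

lemma closed_segment_horizontal:
  assumes "x \<in> closed_segment (Complex a c) (Complex b c)" "a \<le> b"
  shows "Im x = c" "a \<le> Re x" "Re x \<le> b"
proof -
  obtain u where u: "0 \<le> u" "u \<le> 1" "x = (1 - u) *\<^sub>R Complex a c + u *\<^sub>R Complex b c"
    using assms(1) unfolding closed_segment_def by auto
  have "Re x = a + u * (b - a)" "Im x = c"
    unfolding u(3) by (simp_all add: algebra_simps)
  moreover have "0 \<le> u * (b - a)" "u * (b - a) \<le> b - a"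
    using u assms(2) by (auto simp: mult_left_le_one_le)
  ultimately show "Im x = c" "a \<le> Re x" "Re x \<le> b"
    by auto
qed

lemma norm_contour_integral_horizontal_le:
  fixes f :: "complex \<Rightarrow> complex"
  assumes "continuous_on UNIV f" "\<sigma>1 \<le> \<sigma>2" "B \<ge> 0"
    and "\<And>u. \<sigma>1 \<le> u \<Longrightarrow> u \<le> \<sigma>2 \<Longrightarrow> norm (f (Complex u \<tau>)) \<le> B"
  shows "norm (contour_integral (linepath (Complex \<sigma>1 \<tau>) (Complex \<sigma>2 \<tau>)) f) \<le> B * (\<sigma>2 - \<sigma>1)"
proof -
  have int: "f contour_integrable_on linepath (Complex \<sigma>1 \<tau>) (Complex \<sigma>2 \<tau>)"
    using assms(1) by (intro contour_integrable_continuous_linepath) (auto intro: continuous_on_subset)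
  have bound: "norm (f x) \<le> B" if "x \<in> closed_segment (Complex \<sigma>1 \<tau>) (Complex \<sigma>2 \<tau>)" for x
  proof -
    note x = closed_segment_horizontal[OF that assms(2)]
    have "Complex (Re x) \<tau> = x"
      using x(1) by (simp add: complex_eq_iff)
    with assms(4)[OF x(2,3)] show ?thesis by simp
  qed
  have "norm (contour_integral (linepath (Complex \<sigma>1 \<tau>) (Complex \<sigma>2 \<tau>)) f)
      \<le> B * norm (Complex \<sigma>2 \<tau> - Complex \<sigma>1 \<tau>)"
    by (rule has_contour_integral_bound_linepath[OF has_contour_integral_integral[OF int] \<open>B \<ge> 0\<close> bound])
  also have "norm (Complex \<sigma>2 \<tau> - Complex \<sigma>1 \<tau>) = \<sigma>2 - \<sigma>1"
    using assms(2) by (simp add: cmod_def)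
  finally show ?thesis .
qed

lemma norm_vertical_integrals_diff_le:
  fixes f :: "complex \<Rightarrow> complex"
  assumes hol: "f holomorphic_on UNIV" and "\<sigma>1 < \<sigma>2" "T > 0" "B \<ge> 0"
    and "\<And>u. \<sigma>1 \<le> u \<Longrightarrow> u \<le> \<sigma>2 \<Longrightarrow> norm (f (Complex u T)) \<le> B \<and> norm (f (Complex u (-T))) \<le> B"
  shows "norm (integral {-T..T} (\<lambda>t. f (Complex \<sigma>1 t)) - integral {-T..T} (\<lambda>t. f (Complex \<sigma>2 t)))
           \<le> 2 * B * (\<sigma>2 - \<sigma>1)"
proof -
  define A1 where "A1 = Complex \<sigma>1 (-T)"
  define A2 where "A2 = Complex \<sigma>2 (-T)"
  define A3 where "A3 = Complex \<sigma>2 T"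
  define A4 where "A4 = Complex \<sigma>1 T"
  have cont: "continuous_on S f" for S
    using holomorphic_on_imp_continuous_on[OF hol] continuous_on_subset by blast
  have rectpath: "rectpath A1 A3 = linepath A1 A2 +++ linepath A2 A3 +++ linepath A3 A4 +++ linepath A4 A1"
    by (simp add: rectpath_def A1_def A2_def A3_def A4_def Let_def)
  have "(f has_contour_integral 0) (rectpath A1 A3)"
    by (rule Cauchy_theorem_convex_simple[OF hol]) auto
  then have "contour_integral (rectpath A1 A3) f = 0"
    by (rule contour_integral_unique)
  then have "contour_integral (linepath A1 A2) f + contour_integral (linepath A2 A3) f
         + contour_integral (linepath A3 A4) f + contour_integral (linepath A4 A1) f = 0"
    unfolding rectpath
    by (simp add: contour_integrable_continuous_linepath cont valid_path_join add.assoc)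
  moreover have "contour_integral (linepath A2 A3) f = \<i> * integral {-T..T} (\<lambda>t. f (Complex \<sigma>2 t))"
    unfolding A2_def A3_def using assms by (intro contour_integral_vertical_linepath cont) auto
  moreover have "contour_integral (linepath A4 A1) f = - (\<i> * integral {-T..T} (\<lambda>t. f (Complex \<sigma>1 t)))"
    unfolding A1_def A4_def using assms
    by (subst contour_integral_reverse_linepath[OF cont]) (simp add: contour_integral_vertical_linepath cont)
  moreover have "contour_integral (linepath A3 A4) f = - contour_integral (linepath A4 A3) f"
    by (rule contour_integral_reverse_linepath[OF cont])
  ultimately have "\<i> * (integral {-T..T} (\<lambda>t. f (Complex \<sigma>1 t)) - integral {-T..T} (\<lambda>t. f (Complex \<sigma>2 t)))
      = contour_integral (linepath A1 A2) f - contour_integral (linepath A4 A3) f"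
    by (simp add: algebra_simps)
  then have "norm (integral {-T..T} (\<lambda>t. f (Complex \<sigma>1 t)) - integral {-T..T} (\<lambda>t. f (Complex \<sigma>2 t)))
      = norm (contour_integral (linepath A1 A2) f - contour_integral (linepath A4 A3) f)"
    by (metis norm_ii norm_mult mult_1)
  also have "\<dots> \<le> norm (contour_integral (linepath A1 A2) f) + norm (contour_integral (linepath A4 A3) f)"
    by (rule norm_triangle_ineq4)
  also have "\<dots> \<le> B * (\<sigma>2 - \<sigma>1) + B * (\<sigma>2 - \<sigma>1)"
    unfolding A1_def A2_def A3_def A4_def using assms
    by (intro add_mono norm_contour_integral_horizontal_le cont) auto
  finally show ?thesis by simp
qed

subsection \<open>Inverse powers along vertical lines\<close>

lemma continuous_on_inverse_power: "continuous_on (-{0}) (\<lambda>z::complex. inverse z ^ m)"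
  by (intro continuous_intros) auto

lemma has_integral_inverse_power_vertical:
  assumes "\<sigma> \<noteq> 0" "m \<ge> 2" "a \<le> b"
  shows "((\<lambda>t. inverse (Complex \<sigma> t) ^ m) has_integral
          (\<i> / of_nat (m - 1)) * (inverse (Complex \<sigma> b) ^ (m - 1) - inverse (Complex \<sigma> a) ^ (m - 1))) {a..b}"
proof -
  define g where "g = (\<lambda>w::complex. (\<i> / of_nat (m - 1)) * inverse w ^ (m - 1))"
  have deriv_coeff: "(\<i> / of_nat (m - 1)) * (of_nat (m - 1) * v ^ (m - 1 - 1) * (- (v * v))) = - \<i> * v ^ m"
    for v :: complex
  proof -
    define k where "k = m - 2"
    have m: "m = Suc (Suc k)" using assms(2) unfolding k_def by simp
    have "of_nat (Suc k) \<noteq> (0::complex)" by (rule of_nat_neq_0)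
    then show ?thesis unfolding m by (simp add: field_simps power_Suc2)
  qed
  have "(g has_field_derivative (- \<i> * inverse w ^ m)) (at w)" if "w \<noteq> 0" for w
  proof -
    have "(g has_field_derivative ((\<i> / of_nat (m - 1))
        * (of_nat (m - 1) * inverse w ^ (m - 1 - 1) * (- (inverse w * inverse w))))) (at w)"
      unfolding g_def using that by (auto intro!: derivative_eq_intros)
    then show ?thesis unfolding deriv_coeff .
  qed
  from field_vector_diff_chain_at[OF has_vector_derivative_Complex this[OF Complex_neq_0[OF assms(1)]]]
  have "((\<lambda>t. g (Complex \<sigma> t)) has_vector_derivative inverse (Complex \<sigma> t) ^ m) (at t within {a..b})" for t
    by (auto simp: o_def intro: has_vector_derivative_at_within)
  from fundamental_theorem_of_calculus[OF assms(3) this] show ?thesis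
    by (simp add: g_def algebra_simps)
qed

lemma has_integral_inverse_vertical:
  assumes "\<sigma> \<noteq> 0" "a \<le> b"
  shows "((\<lambda>t. inverse (Complex \<sigma> t)) has_integral
     (of_real (arctan (b / \<sigma>) - arctan (a / \<sigma>)) - \<i> * of_real ((ln (\<sigma>\<^sup>2 + b\<^sup>2) - ln (\<sigma>\<^sup>2 + a\<^sup>2)) / 2))) {a..b}"
proof -
  define F where "F = (\<lambda>t. of_real (arctan (t / \<sigma>)) - \<i> * of_real (ln (\<sigma>\<^sup>2 + t\<^sup>2) / 2))"
  have pos: "\<sigma>\<^sup>2 + t\<^sup>2 > 0" for t using assms by (simp add: add_pos_nonneg)
  have d1: "((\<lambda>t. arctan (t / \<sigma>)) has_real_derivative (\<sigma> / (\<sigma>\<^sup>2 + t\<^sup>2))) (at t)" for t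
  proof -
    have "((\<lambda>t. arctan (t / \<sigma>)) has_real_derivative (inverse (1 + (t / \<sigma>)\<^sup>2) * (1 / \<sigma>))) (at t)"
      by (intro DERIV_arctan[THEN DERIV_chain2] DERIV_cdivide DERIV_ident)
    moreover have "inverse (1 + (t / \<sigma>)\<^sup>2) * (1 / \<sigma>) = \<sigma> / (\<sigma>\<^sup>2 + t\<^sup>2)"
      using assms(1) pos[of t] by (simp add: field_simps power2_eq_square)
    ultimately show ?thesis by simp
  qed
  have d2: "((\<lambda>t. ln (\<sigma>\<^sup>2 + t\<^sup>2) / 2) has_real_derivative (t / (\<sigma>\<^sup>2 + t\<^sup>2))) (at t)" for t
  proof -
    have "\<sigma> * \<sigma> + t * t \<noteq> 0" using pos[of t] unfolding power2_eq_square by linarith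
    then show ?thesis
      using pos[of t] by (auto intro!: derivative_eq_intros simp: power2_eq_square field_simps assms(1))
  qed
  have "(F has_vector_derivative (of_real (\<sigma> / (\<sigma>\<^sup>2 + t\<^sup>2)) - \<i> * of_real (t / (\<sigma>\<^sup>2 + t\<^sup>2)))) (at t)" for t
    unfolding F_def by (intro has_vector_derivative_diff has_vector_derivative_mult_right
       has_vector_derivative_of_real d1 d2)
  moreover have "of_real (\<sigma> / (\<sigma>\<^sup>2 + t\<^sup>2)) - \<i> * of_real (t / (\<sigma>\<^sup>2 + t\<^sup>2)) = inverse (Complex \<sigma> t)" for t
    by (simp add: complex_eq_iff power2_eq_square)
  ultimately have "(F has_vector_derivative inverse (Complex \<sigma> t)) (at t within {a..b})" for t
    by (metis has_vector_derivative_at_within)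
  from fundamental_theorem_of_calculus[OF assms(2) this] show ?thesis
    by (simp add: F_def algebra_simps diff_divide_distrib)
qed

lemma norm_inverse_power_Complex_le:
  assumes "\<sigma> \<noteq> 0" "m \<ge> 2"
  shows "norm (inverse (Complex \<sigma> t) ^ m) \<le> (1 / \<bar>\<sigma>\<bar> ^ (m - 2)) * (1 / (\<sigma>\<^sup>2 + t\<^sup>2))"
proof -
  let ?n = "norm (Complex \<sigma> t)"
  have "m = (m - 2) + 2" using assms(2) by simp
  then have "?n ^ m = ?n ^ (m - 2) * ?n\<^sup>2"
    by (metis power_add)
  also have "\<dots> \<ge> \<bar>\<sigma>\<bar> ^ (m - 2) * (\<sigma>\<^sup>2 + t\<^sup>2)"
    unfolding norm_Complex_power2 by (intro mult_right_mono power_mono abs_le_norm_Complex) auto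
  finally have le: "\<bar>\<sigma>\<bar> ^ (m - 2) * (\<sigma>\<^sup>2 + t\<^sup>2) \<le> ?n ^ m" .
  have pos: "0 < \<bar>\<sigma>\<bar> ^ (m - 2) * (\<sigma>\<^sup>2 + t\<^sup>2)"
    using assms(1) by (intro mult_pos_pos) (auto simp: add_pos_nonneg)
  have "norm (inverse (Complex \<sigma> t) ^ m) = 1 / ?n ^ m"
    by (simp add: norm_power norm_inverse divide_inverse power_inverse)
  also have "\<dots> \<le> 1 / (\<bar>\<sigma>\<bar> ^ (m - 2) * (\<sigma>\<^sup>2 + t\<^sup>2))"
    using le pos by (intro divide_left_mono) auto
  finally show ?thesis by simp
qed

lemma integrable_inverse_power_vertical:
  assumes "\<sigma> \<noteq> 0" "m \<ge> 2"
  shows "integrable lborel (\<lambda>t. inverse (Complex \<sigma> t) ^ m)"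
proof (rule Bochner_Integration.integrable_bound)
  show "integrable lborel (\<lambda>t. (1 / \<bar>\<sigma>\<bar> ^ (m - 2)) * (1 / (\<sigma>\<^sup>2 + t\<^sup>2)))"
    by (intro integrable_mult_right integrable_inverse_sum_squares[OF assms(1)])
  show "(\<lambda>t. inverse (Complex \<sigma> t) ^ m) \<in> borel_measurable lborel"
    by (rule borel_measurable_vertical[OF continuous_on_inverse_power assms(1)])
  show "AE t in lborel. norm (inverse (Complex \<sigma> t) ^ m) \<le> norm ((1 / \<bar>\<sigma>\<bar> ^ (m - 2)) * (1 / (\<sigma>\<^sup>2 + t\<^sup>2)))"
    using norm_inverse_power_Complex_le[OF assms] by (intro AE_I2) (simp add: add_nonneg_nonneg)
qed

lemma integral_inverse_power_vertical_eq_0: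
  assumes "\<sigma> \<noteq> 0" "m \<ge> 2"
  shows "(\<integral>t. inverse (Complex \<sigma> t) ^ m \<partial>lborel) = 0"
proof -
  have vanish: "(\<lambda>n::nat. inverse (Complex \<sigma> (c * real n))) \<longlonglongrightarrow> 0" if "c = 1 \<or> c = -1" for c
  proof (rule Lim_null_comparison)
    show "\<forall>\<^sub>F n in sequentially. norm (inverse (Complex \<sigma> (c * real n))) \<le> 1 / real n"
    proof (intro eventually_sequentiallyI[of 1])
      fix n :: nat assume "1 \<le> n"
      moreover have "real n \<le> norm (Complex \<sigma> (c * real n))"
        using abs_le_norm_Complex(2)[where s=\<sigma> and t="c * real n"] that by auto
      ultimately show "norm (inverse (Complex \<sigma> (c * real n))) \<le> 1 / real n"
        by (simp add: norm_inverse divide_inverse le_imp_inverse_le)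
    qed
  qed (rule lim_const_over_n)
  have "(\<lambda>n. (\<i> / of_nat (m - 1)) * (inverse (Complex \<sigma> (1 * real n)) ^ (m - 1)
        - inverse (Complex \<sigma> (-1 * real n)) ^ (m - 1))) \<longlonglongrightarrow> (\<i> / of_nat (m - 1)) * (0 ^ (m - 1) - 0 ^ (m - 1))"
    by (intro tendsto_intros vanish) auto
  moreover have "integral {-real n..real n} (\<lambda>t. inverse (Complex \<sigma> t) ^ m)
     = (\<i> / of_nat (m - 1)) * (inverse (Complex \<sigma> (real n)) ^ (m - 1) - inverse (Complex \<sigma> (- real n)) ^ (m - 1))" for n
    using has_integral_inverse_power_vertical[OF assms, of "- real n" "real n"] by (simp add: integral_unique)
  ultimately have "(\<lambda>n::nat. integral {-real n..real n} (\<lambda>t. inverse (Complex \<sigma> t) ^ m)) \<longlonglongrightarrow> 0"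
    using assms(2) by simp
  with tendsto_integral_symmetric_intervals[OF integrable_inverse_power_vertical[OF assms]]
  show ?thesis by (rule LIMSEQ_unique)
qed

lemma tendsto_integral_inverse_vertical:
  assumes "\<sigma> \<noteq> 0"
  shows "(\<lambda>n::nat. integral {-real n..real n} (\<lambda>t. inverse (Complex \<sigma> t))) \<longlonglongrightarrow> of_real (pi * sgn \<sigma>)"
proof -
  have "integral {-real n..real n} (\<lambda>t. inverse (Complex \<sigma> t)) = of_real (2 * arctan (real n / \<sigma>))" for n
    using has_integral_inverse_vertical[OF assms, of "- real n" "real n"]
    by (simp add: integral_unique arctan_minus)
  moreover have "(\<lambda>n::nat. 2 * arctan (real n / \<sigma>)) \<longlonglongrightarrow> pi * sgn \<sigma>"
  proof (cases "\<sigma> > 0")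
    case True
    then show ?thesis by real_asymp
  next
    case False
    with assms have "\<sigma> < 0" by simp
    then show ?thesis by real_asymp
  qed
  ultimately show ?thesis
    by (simp only:) (rule tendsto_of_real)
qed

subsection \<open>The kernel \<open>exp (z x) / z^(p+1)\<close>\<close>

definition exp_coeff :: "real \<Rightarrow> nat \<Rightarrow> complex" where
  "exp_coeff x k = of_real x ^ k / fact k"

definition exp_tail :: "real \<Rightarrow> nat \<Rightarrow> complex \<Rightarrow> complex" where
  "exp_tail x p z = (\<Sum>n. exp_coeff x (n + p + 1) * z ^ n)"

definition exp_kernel :: "real \<Rightarrow> nat \<Rightarrow> complex \<Rightarrow> complex" where
  "exp_kernel x p z = exp (z * of_real x) / z ^ (p + 1)"

lemma summable_exp_tail: "summable (\<lambda>n. exp_coeff x (n + p + 1) * z ^ n)"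
proof (rule summable_comparison_test[OF _ summable_mult[OF summable_exp[of "\<bar>x\<bar> * norm z"]]])
  show "\<exists>N. \<forall>n\<ge>N. norm (exp_coeff x (n + p + 1) * z ^ n)
      \<le> \<bar>x\<bar> ^ (p + 1) * (inverse (fact n) * (\<bar>x\<bar> * norm z) ^ n)"
  proof (intro exI allI impI)
    fix n :: nat
    have "(fact n :: real) \<le> fact (n + p + 1)" by (intro fact_mono) auto
    then have "\<bar>x\<bar> ^ (p + 1) * (\<bar>x\<bar> * norm z) ^ n / fact (n + p + 1)
        \<le> \<bar>x\<bar> ^ (p + 1) * (\<bar>x\<bar> * norm z) ^ n / fact n"
      by (intro divide_left_mono) auto
    moreover have "norm (exp_coeff x (n + p + 1) * z ^ n)
        = \<bar>x\<bar> ^ (p + 1) * (\<bar>x\<bar> * norm z) ^ n / fact (n + p + 1)"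
      unfolding exp_coeff_def norm_mult norm_divide norm_power norm_fact norm_of_real power_add
        power_mult_distrib by (simp add: field_simps)
    ultimately show "norm (exp_coeff x (n + p + 1) * z ^ n)
        \<le> \<bar>x\<bar> ^ (p + 1) * (inverse (fact n) * (\<bar>x\<bar> * norm z) ^ n)"
      by (simp add: field_simps)
  qed
qed

lemma holomorphic_exp_tail: "exp_tail x p holomorphic_on UNIV"
proof -
  have "(exp_tail x p has_field_derivative (\<Sum>n. diffs (\<lambda>n. exp_coeff x (n + p + 1)) n * z ^ n)) (at z)" for z
    unfolding exp_tail_def[abs_def] by (rule termdiffs_strong_converges_everywhere[OF summable_exp_tail])
  then show ?thesis
    by (auto simp: holomorphic_on_def field_differentiable_def intro: has_field_derivative_at_within)
qed

lemma continuous_on_exp_tail: "continuous_on S (exp_tail x p)"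
  using holomorphic_on_imp_continuous_on[OF holomorphic_exp_tail] continuous_on_subset by blast

lemma exp_kernel_eq_exp_tail_plus_principal_part:
  assumes "z \<noteq> 0"
  shows "exp_kernel x p z = exp_tail x p z + (\<Sum>k<p+1. exp_coeff x k * inverse z ^ (p + 1 - k))"
proof -
  let ?f = "\<lambda>n. (z * of_real x) ^ n /\<^sub>R fact n"
  have power_term: "?f n = exp_coeff x n * z ^ n" for n
    by (simp add: exp_coeff_def scaleR_conv_of_real power_mult_distrib divide_inverse mult_ac)
  have "exp (z * of_real x) = (\<Sum>n. ?f (n + (p + 1))) + (\<Sum>k<p+1. ?f k)"
    unfolding exp_def by (rule suminf_split_initial_segment[OF summable_exp_generic])
  also have "(\<Sum>n. ?f (n + (p + 1))) = (\<Sum>n. z ^ (p + 1) * (exp_coeff x (n + p + 1) * z ^ n))"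
    unfolding power_term by (simp add: power_add mult_ac)
  also have "\<dots> = z ^ (p + 1) * exp_tail x p z"
    unfolding exp_tail_def by (rule suminf_mult[OF summable_exp_tail])
  finally have exp: "exp (z * of_real x) = z ^ (p + 1) * exp_tail x p z + (\<Sum>k<p+1. ?f k)" .
  have "(\<Sum>k<p+1. ?f k) / z ^ (p + 1) = (\<Sum>k<p+1. exp_coeff x k * inverse z ^ (p + 1 - k))"
    unfolding sum_divide_distrib
  proof (rule sum.cong)
    fix k assume "k \<in> {..<p+1}"
    then have "k \<le> p + 1" by simp
    then have "z ^ k / z ^ (p + 1) = inverse z ^ (p + 1 - k)"
      by (rule divide_power_eq_inverse_power[OF assms])
    then show "?f k / z ^ (p + 1) = exp_coeff x k * inverse z ^ (p + 1 - k)"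
      unfolding power_term times_divide_eq_right[symmetric] by (rule arg_cong)
  qed simp
  with assms show ?thesis
    unfolding exp_kernel_def exp by (simp add: field_simps)
qed

lemma norm_exp_kernel:
  "norm (exp_kernel x p (Complex \<sigma> t)) = exp (\<sigma> * x) * norm (inverse (Complex \<sigma> t) ^ (p + 1))"
  unfolding exp_kernel_def norm_divide norm_exp_eq_Re norm_power norm_inverse
  by (simp add: divide_inverse power_inverse)

lemma continuous_on_exp_kernel: "continuous_on (-{0}) (exp_kernel x p)"
  unfolding exp_kernel_def by (intro continuous_intros) auto

lemma integrable_exp_kernel_vertical:
  assumes "\<sigma> \<noteq> 0" "p \<ge> 1"
  shows "integrable lborel (\<lambda>t. exp_kernel x p (Complex \<sigma> t))"
proof (rule Bochner_Integration.integrable_bound)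
  show "integrable lborel (\<lambda>t. exp (\<sigma> * x) * norm (inverse (Complex \<sigma> t) ^ (p + 1)))"
    using integrable_inverse_power_vertical[OF assms(1), of "p + 1"] assms(2)
    by (intro integrable_mult_right integrable_norm) auto
  show "(\<lambda>t. exp_kernel x p (Complex \<sigma> t)) \<in> borel_measurable lborel"
    by (rule borel_measurable_vertical[OF continuous_on_exp_kernel assms(1)])
  show "AE t in lborel. norm (exp_kernel x p (Complex \<sigma> t))
      \<le> norm (exp (\<sigma> * x) * norm (inverse (Complex \<sigma> t) ^ (p + 1)))"
    by (intro AE_I2) (simp add: norm_exp_kernel)
qed

lemma norm_exp_tail_le:
  assumes "T \<ge> 1" "\<bar>\<tau>\<bar> \<ge> T" "\<sigma>1 \<le> u" "u \<le> \<sigma>2"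
  shows "norm (exp_tail x p (Complex u \<tau>))
    \<le> (max (exp (\<sigma>1 * x)) (exp (\<sigma>2 * x)) + (\<Sum>k<p+1. norm (exp_coeff x k))) / T"
proof -
  let ?z = "Complex u \<tau>"
  have z: "norm ?z \<ge> T" using abs_le_norm_Complex(2)[where s=u and t=\<tau>] assms by simp
  then have "?z \<noteq> 0" using assms by auto
  then have "exp_tail x p ?z = exp_kernel x p ?z - (\<Sum>k<p+1. exp_coeff x k * inverse ?z ^ (p + 1 - k))"
    using exp_kernel_eq_exp_tail_plus_principal_part[of ?z x p] by simp
  then have "norm (exp_tail x p ?z)
      \<le> norm (exp_kernel x p ?z) + norm (\<Sum>k<p+1. exp_coeff x k * inverse ?z ^ (p + 1 - k))"
    by (simp only: norm_triangle_ineq4)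
  also have "norm (exp_kernel x p ?z) \<le> max (exp (\<sigma>1 * x)) (exp (\<sigma>2 * x)) * (1 / T)"
  proof -
    have "u * x \<le> \<sigma>1 * x \<or> u * x \<le> \<sigma>2 * x"
      using assms(3,4) by (cases "x \<ge> 0") (auto intro: mult_right_mono mult_right_mono_neg)
    then have "exp (u * x) \<le> max (exp (\<sigma>1 * x)) (exp (\<sigma>2 * x))"
      by (auto simp: le_max_iff_disj)
    moreover have "norm (inverse ?z ^ (p + 1)) \<le> 1 / T"
      using z assms by (intro norm_inverse_power_le) auto
    ultimately show ?thesis
      unfolding norm_exp_kernel using assms by (intro mult_mono) (auto simp: le_max_iff_disj)
  qed
  also have "norm (\<Sum>k<p+1. exp_coeff x k * inverse ?z ^ (p + 1 - k))
      \<le> (\<Sum>k<p+1. norm (exp_coeff x k)) * (1 / T)"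
    unfolding sum_distrib_right
  proof (rule order_trans[OF norm_sum sum_mono])
    fix k assume "k \<in> {..<p+1}"
    then have "norm (inverse ?z ^ (p + 1 - k)) \<le> 1 / T"
      using z assms by (intro norm_inverse_power_le) auto
    then show "norm (exp_coeff x k * inverse ?z ^ (p + 1 - k)) \<le> norm (exp_coeff x k) * (1 / T)"
      unfolding norm_mult by (intro mult_left_mono) auto
  qed
  finally show ?thesis by (simp add: add_divide_distrib)
qed

lemma integral_exp_kernel_interval_decomp:
  assumes "\<sigma> \<noteq> 0"
  shows "integral {a..b} (\<lambda>t. exp_kernel x p (Complex \<sigma> t)) = integral {a..b} (\<lambda>t. exp_tail x p (Complex \<sigma> t))
     + (\<Sum>k<p+1. exp_coeff x k * integral {a..b} (\<lambda>t. inverse (Complex \<sigma> t) ^ (p + 1 - k)))"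
proof -
  have tail: "(\<lambda>t. exp_tail x p (Complex \<sigma> t)) integrable_on {a..b}"
    by (intro integrable_continuous_interval continuous_on_compose2[OF continuous_on_exp_tail
        continuous_on_Complex]) auto
  have powers: "(\<lambda>t. exp_coeff x k * inverse (Complex \<sigma> t) ^ (p + 1 - k)) integrable_on {a..b}" for k
    by (rule integrable_on_mult_right[OF integrable_on_vertical[OF continuous_on_inverse_power assms]])
  have "integral {a..b} (\<lambda>t. exp_kernel x p (Complex \<sigma> t)) = integral {a..b}
      (\<lambda>t. exp_tail x p (Complex \<sigma> t) + (\<Sum>k<p+1. exp_coeff x k * inverse (Complex \<sigma> t) ^ (p + 1 - k)))"
    using exp_kernel_eq_exp_tail_plus_principal_part[OF Complex_neq_0[OF assms]] by simp
  also have "\<dots> = integral {a..b} (\<lambda>t. exp_tail x p (Complex \<sigma> t))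
      + (\<Sum>k<p+1. integral {a..b} (\<lambda>t. exp_coeff x k * inverse (Complex \<sigma> t) ^ (p + 1 - k)))"
  proof -
    have "integral {a..b} (\<lambda>t. \<Sum>k<p+1. exp_coeff x k * inverse (Complex \<sigma> t) ^ (p + 1 - k))
        = (\<Sum>k<p+1. integral {a..b} (\<lambda>t. exp_coeff x k * inverse (Complex \<sigma> t) ^ (p + 1 - k)))"
      by (rule integral_sum) (use powers in auto)
    moreover have "(\<lambda>t. \<Sum>k<p+1. exp_coeff x k * inverse (Complex \<sigma> t) ^ (p + 1 - k)) integrable_on {a..b}"
      by (rule integrable_sum) (use powers in auto)
    ultimately show ?thesis by (simp only: integral_add[OF tail])
  qed
  finally show ?thesis by simp
qed

lemma tendsto_exp_tail_vertical_diff: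
  assumes "\<sigma>1 < \<sigma>2"
  shows "(\<lambda>n. integral {-real n..real n} (\<lambda>t. exp_tail x p (Complex \<sigma>1 t))
           - integral {-real n..real n} (\<lambda>t. exp_tail x p (Complex \<sigma>2 t))) \<longlonglongrightarrow> 0"
proof (rule Lim_null_comparison)
  define B where "B = max (exp (\<sigma>1 * x)) (exp (\<sigma>2 * x)) + (\<Sum>k<p+1. norm (exp_coeff x k))"
  have "B \<ge> 0" unfolding B_def by (intro add_nonneg_nonneg sum_nonneg) (auto simp: le_max_iff_disj)
  show "\<forall>\<^sub>F n in sequentially. norm (integral {-real n..real n} (\<lambda>t. exp_tail x p (Complex \<sigma>1 t))
      - integral {-real n..real n} (\<lambda>t. exp_tail x p (Complex \<sigma>2 t))) \<le> 2 * (B / real n) * (\<sigma>2 - \<sigma>1)"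
  proof (intro eventually_sequentiallyI[of 1])
    fix n :: nat assume "1 \<le> n"
    with \<open>B \<ge> 0\<close> show "norm (integral {-real n..real n} (\<lambda>t. exp_tail x p (Complex \<sigma>1 t))
      - integral {-real n..real n} (\<lambda>t. exp_tail x p (Complex \<sigma>2 t))) \<le> 2 * (B / real n) * (\<sigma>2 - \<sigma>1)"
      unfolding B_def
      by (intro norm_vertical_integrals_diff_le[OF holomorphic_exp_tail assms] conjI norm_exp_tail_le) auto
  qed
  show "(\<lambda>n. 2 * (B / real n) * (\<sigma>2 - \<sigma>1)) \<longlonglongrightarrow> 0" by real_asymp
qed

lemma integral_exp_kernel_vertical_diff:
  assumes "\<sigma>1 < \<sigma>2" "\<sigma>1 \<noteq> 0" "\<sigma>2 \<noteq> 0" "p \<ge> 1"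
  shows "(\<integral>t. exp_kernel x p (Complex \<sigma>1 t) \<partial>lborel) - (\<integral>t. exp_kernel x p (Complex \<sigma>2 t) \<partial>lborel)
     = exp_coeff x p * of_real (pi * sgn \<sigma>1 - pi * sgn \<sigma>2)"
proof -
  define Ir where "Ir = (\<lambda>\<sigma> (n::nat). integral {-real n..real n} (\<lambda>t. exp_tail x p (Complex \<sigma> t)))"
  define Iq where "Iq = (\<lambda>\<sigma> k (n::nat). integral {-real n..real n} (\<lambda>t. inverse (Complex \<sigma> t) ^ (p + 1 - k)))"
  define Ih where "Ih = (\<lambda>\<sigma> (n::nat). integral {-real n..real n} (\<lambda>t. exp_kernel x p (Complex \<sigma> t)))"
  have lim: "(\<lambda>n. Ih \<sigma>1 n - Ih \<sigma>2 n) \<longlonglongrightarrow>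
      (\<integral>t. exp_kernel x p (Complex \<sigma>1 t) \<partial>lborel) - (\<integral>t. exp_kernel x p (Complex \<sigma>2 t) \<partial>lborel)"
    unfolding Ih_def using assms
    by (intro tendsto_diff tendsto_integral_symmetric_intervals integrable_exp_kernel_vertical) auto
  have split: "Ih \<sigma> n = Ir \<sigma> n + (\<Sum>k<p. exp_coeff x k * Iq \<sigma> k n) + exp_coeff x p * Iq \<sigma> p n"
    if "\<sigma> \<noteq> 0" for \<sigma> n
    unfolding Ih_def Ir_def Iq_def integral_exp_kernel_interval_decomp[OF that] by simp
  have diff: "Ih \<sigma>1 n - Ih \<sigma>2 n = (Ir \<sigma>1 n - Ir \<sigma>2 n)
      + (\<Sum>k<p. exp_coeff x k * (Iq \<sigma>1 k n - Iq \<sigma>2 k n)) + exp_coeff x p * (Iq \<sigma>1 p n - Iq \<sigma>2 p n)" for n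
    unfolding split[OF assms(2)] split[OF assms(3)] by (simp add: algebra_simps sum_subtractf[symmetric])
  have tail: "(\<lambda>n. Ir \<sigma>1 n - Ir \<sigma>2 n) \<longlonglongrightarrow> 0"
    unfolding Ir_def by (rule tendsto_exp_tail_vertical_diff[OF assms(1)])
  have higher: "(\<lambda>n. Iq \<sigma> k n) \<longlonglongrightarrow> 0" if "k < p" "\<sigma> \<noteq> 0" for k \<sigma>
  proof -
    have m: "p + 1 - k \<ge> 2" using that by simp
    show ?thesis
      unfolding Iq_def using tendsto_integral_symmetric_intervals[OF integrable_inverse_power_vertical[OF that(2) m]]
        integral_inverse_power_vertical_eq_0[OF that(2) m] by simp
  qed
  have first: "(\<lambda>n. Iq \<sigma> p n) \<longlonglongrightarrow> of_real (pi * sgn \<sigma>)" if "\<sigma> \<noteq> 0" for \<sigma>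
    unfolding Iq_def using tendsto_integral_inverse_vertical[OF that] by simp
  have "(\<lambda>n. (Ir \<sigma>1 n - Ir \<sigma>2 n) + (\<Sum>k<p. exp_coeff x k * (Iq \<sigma>1 k n - Iq \<sigma>2 k n))
      + exp_coeff x p * (Iq \<sigma>1 p n - Iq \<sigma>2 p n)) \<longlonglongrightarrow>
      0 + (\<Sum>k<p. exp_coeff x k * (0 - 0)) + exp_coeff x p * (of_real (pi * sgn \<sigma>1) - of_real (pi * sgn \<sigma>2))"
    by (intro tendsto_add tendsto_sum tendsto_mult tendsto_diff tendsto_const tail higher first assms) auto
  then have "(\<lambda>n. Ih \<sigma>1 n - Ih \<sigma>2 n) \<longlonglongrightarrow> exp_coeff x p * of_real (pi * sgn \<sigma>1 - pi * sgn \<sigma>2)"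
    unfolding diff by simp
  with lim show ?thesis by (rule LIMSEQ_unique)
qed

lemma norm_integral_exp_kernel_vertical_le:
  assumes "\<bar>\<sigma>\<bar> \<ge> 1" "p \<ge> 1"
  shows "norm (\<integral>t. exp_kernel x p (Complex \<sigma> t) \<partial>lborel) \<le> exp (\<sigma> * x) * pi / \<bar>\<sigma>\<bar>"
proof -
  have \<sigma>: "\<sigma> \<noteq> 0" using assms by auto
  have "norm (\<integral>t. exp_kernel x p (Complex \<sigma> t) \<partial>lborel) \<le> (\<integral>t. norm (exp_kernel x p (Complex \<sigma> t)) \<partial>lborel)"
    by (rule integral_norm_bound)
  also have "\<dots> \<le> (\<integral>t. exp (\<sigma> * x) * (1 / (\<sigma>\<^sup>2 + t\<^sup>2)) \<partial>lborel)"
  proof (rule integral_mono)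
    show "integrable lborel (\<lambda>t. norm (exp_kernel x p (Complex \<sigma> t)))"
      using integrable_exp_kernel_vertical[OF \<sigma> assms(2)] by (rule integrable_norm)
    show "integrable lborel (\<lambda>t. exp (\<sigma> * x) * (1 / (\<sigma>\<^sup>2 + t\<^sup>2)))"
      by (intro integrable_mult_right integrable_inverse_sum_squares[OF \<sigma>])
    fix t
    have "1 \<le> \<bar>\<sigma>\<bar> ^ (p + 1 - 2)" using assms by (intro one_le_power) auto
    then have "1 / \<bar>\<sigma>\<bar> ^ (p + 1 - 2) * (1 / (\<sigma>\<^sup>2 + t\<^sup>2)) \<le> 1 * (1 / (\<sigma>\<^sup>2 + t\<^sup>2))"
      using \<sigma> by (intro mult_right_mono) (auto simp: divide_le_eq_1 add_nonneg_nonneg)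
    with norm_inverse_power_Complex_le[OF \<sigma>, of "p + 1" t] assms(2)
    show "norm (exp_kernel x p (Complex \<sigma> t)) \<le> exp (\<sigma> * x) * (1 / (\<sigma>\<^sup>2 + t\<^sup>2))"
      unfolding norm_exp_kernel by (intro mult_left_mono) auto
  qed
  also have "\<dots> = exp (\<sigma> * x) * pi / \<bar>\<sigma>\<bar>"
    using integral_inverse_sum_squares[OF \<sigma>] by (simp only: integral_mult_right_zero) simp
  finally show ?thesis .
qed

text \<open>
  Shift the line to \<open>\<sigma> \<rightarrow> -\<infinity>\<close> if \<open>x \<ge> 0\<close> and to \<open>\<sigma> \<rightarrow> +\<infinity>\<close> if \<open>x < 0\<close>; only the second
  shift crosses the pole at \<open>0\<close>.
\<close>

lemma integral_exp_kernel_vertical: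
  assumes "s < 0" "p \<ge> 1"
  shows "(\<integral>t. exp_kernel x p (Complex s t) \<partial>lborel) = of_real (2 * pi / fact p * ((max 0 x) ^ p - x ^ p))"
proof -
  let ?I = "\<lambda>\<sigma>. \<integral>t. exp_kernel x p (Complex \<sigma> t) \<partial>lborel"
  have far: "norm (?I \<sigma>) \<le> pi / (real n + 1)" if "\<sigma> * x \<le> 0" "\<bar>\<sigma>\<bar> \<ge> real n + 1" for \<sigma> n
  proof -
    have "norm (?I \<sigma>) \<le> exp (\<sigma> * x) * pi / \<bar>\<sigma>\<bar>"
      using that by (intro norm_integral_exp_kernel_vertical_le assms(2)) auto
    also have "\<dots> \<le> 1 * pi / (real n + 1)"
      using that by (intro frac_le mult_right_mono) auto
    finally show ?thesis by simp
  qed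
  show ?thesis
  proof (cases "x \<ge> 0")
    case True
    have "norm (?I s) \<le> pi / (real n + 1)" for n
      using integral_exp_kernel_vertical_diff[of "s - real n - 1" s p x] far[of "s - real n - 1" n] assms True
      by (simp add: mult_nonpos_nonneg)
    then have "?I s = 0"
      by (rule eq_0_if_norm_le_div_Suc)
    with True show ?thesis by simp
  next
    case False
    have "norm (?I s + 2 * pi * exp_coeff x p) \<le> pi / (real n + 1)" for n
    proof -
      have "(real n + 1) * x \<le> 0" using False by (intro mult_nonneg_nonpos) auto
      from far[OF this abs_ge_self] show ?thesis
        using integral_exp_kernel_vertical_diff[of s "real n + 1" p x] assms by (simp add: algebra_simps)
    qed
    then have "?I s + 2 * pi * exp_coeff x p = 0"
      by (rule eq_0_if_norm_le_div_Suc)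
    then have "?I s = - 2 * pi * exp_coeff x p"
      by (simp add: eq_neg_iff_add_eq_0)
    with False assms show ?thesis by (simp add: exp_coeff_def power_0_left)
  qed
qed

subsection \<open>Truncated exponentials\<close>

definition exp_trunc_kernel :: "int \<Rightarrow> nat \<Rightarrow> real \<Rightarrow> real \<Rightarrow> real \<Rightarrow> complex" where
  "exp_trunc_kernel j p s x t = exp_trunc j (Complex s t * complex_of_real x) / (Complex s t) ^ (p + 1)"

lemma continuous_on_exp_trunc: "continuous_on A (exp_trunc j)"
  unfolding exp_trunc_def[abs_def] by (intro continuous_intros) auto

lemma norm_exp_trunc_le: "norm (exp_trunc j w) \<le> exp (Re w) + (\<Sum>k<nat (j + 1). norm w ^ k / fact k)"
proof -
  have "norm (exp_trunc j w) \<le> norm (exp w) + norm (\<Sum>k<nat (j + 1). w ^ k / of_nat (fact k))"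
    unfolding exp_trunc_def by (rule norm_triangle_ineq4)
  also have "norm (\<Sum>k<nat (j + 1). w ^ k / of_nat (fact k)) \<le> (\<Sum>k<nat (j + 1). norm w ^ k / fact k)"
    by (rule order_trans[OF norm_sum]) (simp add: norm_divide norm_power)
  finally show ?thesis by simp
qed

lemma exp_trunc_cnj: "exp_trunc j (cnj w) = cnj (exp_trunc j w)"
  unfolding exp_trunc_def by (simp add: exp_cnj)

lemma exp_trunc_div_power_eq:
  assumes "z \<noteq> 0" "nat (j + 1) \<le> p + 1"
  shows "exp_trunc j (z * complex_of_real x) / z ^ (p + 1)
     = exp_kernel x p z - (\<Sum>k<nat (j + 1). exp_coeff x k * inverse z ^ (p + 1 - k))"
proof -
  have "exp_trunc j (z * complex_of_real x) / z ^ (p + 1)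
      = exp_kernel x p z - (\<Sum>k<nat (j + 1). (z * complex_of_real x) ^ k / of_nat (fact k) / z ^ (p + 1))"
    unfolding exp_trunc_def exp_kernel_def by (simp add: diff_divide_distrib sum_divide_distrib)
  also have "(\<Sum>k<nat (j + 1). (z * complex_of_real x) ^ k / of_nat (fact k) / z ^ (p + 1))
      = (\<Sum>k<nat (j + 1). exp_coeff x k * inverse z ^ (p + 1 - k))"
  proof (rule sum.cong)
    fix k assume "k \<in> {..<nat (j + 1)}"
    then have "k \<le> p + 1" using assms by simp
    then have "z ^ k / z ^ (p + 1) = inverse z ^ (p + 1 - k)"
      by (rule divide_power_eq_inverse_power[OF assms(1)])
    moreover have "(z * complex_of_real x) ^ k / of_nat (fact k) / z ^ (p + 1)
        = exp_coeff x k * (z ^ k / z ^ (p + 1))"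
      unfolding exp_coeff_def power_mult_distrib by (simp add: field_simps)
    ultimately show "(z * complex_of_real x) ^ k / of_nat (fact k) / z ^ (p + 1)
        = exp_coeff x k * inverse z ^ (p + 1 - k)"
      by simp
  qed simp
  finally show ?thesis .
qed

lemma integral_exp_trunc_kernel:
  assumes "s < 0" "p \<ge> 1" "-1 \<le> j" "j \<le> int p - 1"
  shows "(\<integral>t. exp_trunc_kernel j p s x t \<partial>lborel) = of_real (2 * pi / fact p * ((max 0 x) ^ p - x ^ p))"
proof -
  have s: "s \<noteq> 0" using assms by simp
  have j: "nat (j + 1) \<le> p" using assms by simp
  have eq: "exp_trunc_kernel j p s x = (\<lambda>t. exp_kernel x p (Complex s t)
      - (\<Sum>k<nat (j + 1). exp_coeff x k * inverse (Complex s t) ^ (p + 1 - k)))"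
    unfolding exp_trunc_kernel_def using exp_trunc_div_power_eq[OF Complex_neq_0[OF s]] j by auto
  have m: "p + 1 - k \<ge> 2" if "k < nat (j + 1)" for k
    using that j by simp
  have powers: "integrable lborel (\<lambda>t. exp_coeff x k * inverse (Complex s t) ^ (p + 1 - k))"
    if "k < nat (j + 1)" for k
    using integrable_inverse_power_vertical[OF s m[OF that]] by simp
  have sum: "integrable lborel (\<lambda>t. \<Sum>k<nat (j + 1). exp_coeff x k * inverse (Complex s t) ^ (p + 1 - k))"
    using powers by (intro Bochner_Integration.integrable_sum) auto
  note kernel = integrable_exp_kernel_vertical[OF s assms(2)]
  have "(\<integral>t. (\<Sum>k<nat (j + 1). exp_coeff x k * inverse (Complex s t) ^ (p + 1 - k)) \<partial>lborel)
      = (\<Sum>k<nat (j + 1). exp_coeff x k * (\<integral>t. inverse (Complex s t) ^ (p + 1 - k) \<partial>lborel))"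
    using powers by (subst Bochner_Integration.integral_sum) auto
  also have "\<dots> = 0"
    using integral_inverse_power_vertical_eq_0[OF s m] by simp
  finally show ?thesis
    unfolding eq Bochner_Integration.integral_diff[OF kernel sum]
    using integral_exp_kernel_vertical[OF assms(1,2)] by simp
qed

lemma continuous_on_exp_trunc_kernel:
  assumes "s \<noteq> 0"
  shows "continuous_on UNIV (\<lambda>xt::real \<times> real. exp_trunc_kernel j p s (fst xt) (snd xt))"
proof -
  have "complex_of_real s + \<i> * complex_of_real b \<noteq> 0" for b
    using assms by (simp add: complex_eq_iff)
  then show ?thesis
    unfolding exp_trunc_kernel_def Complex_eq
    by (intro continuous_intros continuous_on_compose2[OF continuous_on_exp_trunc]) auto
qed

lemma exp_trunc_kernel_minus: "exp_trunc_kernel j p s x (- t) = cnj (exp_trunc_kernel j p s x t)"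
proof -
  have "Complex s (- t) = cnj (Complex s t)"
    by (simp add: complex_eq_iff)
  moreover have "cnj (Complex s t) * complex_of_real x = cnj (Complex s t * complex_of_real x)"
    by simp
  ultimately show ?thesis
    unfolding exp_trunc_kernel_def
    by (simp only: complex_cnj_power[symmetric] exp_trunc_cnj complex_cnj_divide[symmetric])
qed

lemma norm_exp_trunc_kernel_le:
  assumes "s \<noteq> 0" "nat (j + 1) \<le> p + 1"
  shows "norm (exp_trunc_kernel j p s x t) \<le> exp (s * x) * norm (inverse (Complex s t) ^ (p + 1))
     + (\<Sum>k<nat (j + 1). \<bar>x\<bar> ^ k / fact k * norm (inverse (Complex s t) ^ (p + 1 - k)))"
proof -
  have "exp_trunc_kernel j p s x t
      = exp_kernel x p (Complex s t) - (\<Sum>k<nat (j + 1). exp_coeff x k * inverse (Complex s t) ^ (p + 1 - k))"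
    unfolding exp_trunc_kernel_def by (rule exp_trunc_div_power_eq[OF Complex_neq_0[OF assms(1)] assms(2)])
  then have "norm (exp_trunc_kernel j p s x t) \<le> norm (exp_kernel x p (Complex s t))
      + norm (\<Sum>k<nat (j + 1). exp_coeff x k * inverse (Complex s t) ^ (p + 1 - k))"
    by (simp only: norm_triangle_ineq4)
  also have "norm (\<Sum>k<nat (j + 1). exp_coeff x k * inverse (Complex s t) ^ (p + 1 - k))
     \<le> (\<Sum>k<nat (j + 1). \<bar>x\<bar> ^ k / fact k * norm (inverse (Complex s t) ^ (p + 1 - k)))"
    by (rule order_trans[OF norm_sum]) (simp add: exp_coeff_def norm_mult norm_divide norm_power)
  finally show ?thesis unfolding norm_exp_kernel by simp
qed

subsection \<open>Integration against the distribution of \<open>X\<close>\<close>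

lemma (in finite_measure) integrable_abs_power_le:
  fixes X :: "'a \<Rightarrow> real"
  assumes "X \<in> borel_measurable M" "integrable M (\<lambda>\<omega>. \<bar>X \<omega>\<bar> ^ p)" "k \<le> p"
  shows "integrable M (\<lambda>\<omega>. \<bar>X \<omega>\<bar> ^ k)"
proof (rule Bochner_Integration.integrable_bound[where f="\<lambda>\<omega>. 1 + \<bar>X \<omega>\<bar> ^ p"])
  show "integrable M (\<lambda>\<omega>. 1 + \<bar>X \<omega>\<bar> ^ p)" using assms(2) by simp
  show "(\<lambda>\<omega>. \<bar>X \<omega>\<bar> ^ k) \<in> borel_measurable M" using assms(1) by measurable
  have "\<bar>X \<omega>\<bar> ^ k \<le> 1 + \<bar>X \<omega>\<bar> ^ p" for \<omega>
  proof (cases "\<bar>X \<omega>\<bar> \<le> 1")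
    case True
    then have "\<bar>X \<omega>\<bar> ^ k \<le> 1" by (intro power_le_one) auto
    then show ?thesis by (simp add: add_increasing2)
  next
    case False
    then have "\<bar>X \<omega>\<bar> ^ k \<le> \<bar>X \<omega>\<bar> ^ p" by (intro power_increasing assms(3)) auto
    then show ?thesis by simp
  qed
  then show "AE \<omega> in M. norm (\<bar>X \<omega>\<bar> ^ k) \<le> norm (1 + \<bar>X \<omega>\<bar> ^ p)"
    by (intro AE_I2) simp
qed

lemma (in sigma_finite_measure) integrable_pair_lborel_mult:
  fixes f g :: "_ \<Rightarrow> real"
  assumes "integrable M f" "integrable lborel g"
  shows "integrable (M \<Otimes>\<^sub>M lborel) (\<lambda>(\<omega>, t). f \<omega> * g t)"
proof -
  interpret P: pair_sigma_finite M lborel ..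
  have [measurable]: "f \<in> borel_measurable M" "g \<in> borel_measurable lborel" using assms by auto
  show ?thesis
  proof (rule P.Fubini_integrable)
    have "integrable M (\<lambda>x. \<bar>f x\<bar> * (\<integral>y. \<bar>g y\<bar> \<partial>lborel))"
      using assms(1) by (intro integrable_mult_left integrable_abs)
    then show "integrable M (\<lambda>x. \<integral>y. norm (case (x, y) of (\<omega>, t) \<Rightarrow> f \<omega> * g t) \<partial>lborel)"
      by (simp add: abs_mult)
  qed (use assms(2) in simp_all)
qed

lemma (in finite_measure) integrable_exp_trunc:
  fixes X :: "'a \<Rightarrow> real"
  assumes [measurable]: "X \<in> borel_measurable M"
    and "integrable M (\<lambda>\<omega>. exp (s * X \<omega>))" "integrable M (\<lambda>\<omega>. \<bar>X \<omega>\<bar> ^ p)" "j \<le> int p"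
  shows "integrable M (\<lambda>\<omega>. exp_trunc j (Complex s t * complex_of_real (X \<omega>)))"
proof (rule Bochner_Integration.integrable_bound)
  show "integrable M (\<lambda>\<omega>. exp (s * X \<omega>) + (\<Sum>k<nat (j + 1). norm (Complex s t) ^ k * \<bar>X \<omega>\<bar> ^ k / fact k))"
    using assms integrable_abs_power_le[OF assms(1,3)]
    by (intro Bochner_Integration.integrable_add Bochner_Integration.integrable_sum
        integrable_divide integrable_mult_right) auto
  show "(\<lambda>\<omega>. exp_trunc j (Complex s t * complex_of_real (X \<omega>))) \<in> borel_measurable M"
    by (rule borel_measurable_continuous_on[OF continuous_on_exp_trunc]) measurable
  show "AE \<omega> in M. norm (exp_trunc j (Complex s t * complex_of_real (X \<omega>)))
      \<le> norm (exp (s * X \<omega>) + (\<Sum>k<nat (j + 1). norm (Complex s t) ^ k * \<bar>X \<omega>\<bar> ^ k / fact k))"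
  proof (intro AE_I2)
    fix \<omega>
    have "norm (exp_trunc j (Complex s t * complex_of_real (X \<omega>)))
        \<le> exp (s * X \<omega>) + (\<Sum>k<nat (j + 1). norm (Complex s t) ^ k * \<bar>X \<omega>\<bar> ^ k / fact k)"
      using norm_exp_trunc_le[of j "Complex s t * complex_of_real (X \<omega>)"]
      by (simp add: norm_mult power_mult_distrib)
    then show "norm (exp_trunc j (Complex s t * complex_of_real (X \<omega>)))
        \<le> norm (exp (s * X \<omega>) + (\<Sum>k<nat (j + 1). norm (Complex s t) ^ k * \<bar>X \<omega>\<bar> ^ k / fact k))"
      by simp
  qed
qed

lemma (in finite_measure) integrable_pair_exp_trunc_kernel:
  fixes X :: "'a \<Rightarrow> real"
  assumes [measurable]: "X \<in> borel_measurable M"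
    and "integrable M (\<lambda>\<omega>. exp (s * X \<omega>))" "integrable M (\<lambda>\<omega>. \<bar>X \<omega>\<bar> ^ p)"
    and "s \<noteq> 0" "p \<ge> 1" "j \<le> int p - 1"
  shows "integrable (M \<Otimes>\<^sub>M lborel) (\<lambda>(\<omega>, t). exp_trunc_kernel j p s (X \<omega>) t)"
proof -
  let ?e = "\<lambda>(\<omega>, t). exp (s * X \<omega>) * norm (inverse (Complex s t) ^ (p + 1))"
  let ?q = "\<lambda>k (\<omega>, t). \<bar>X \<omega>\<bar> ^ k / fact k * norm (inverse (Complex s t) ^ (p + 1 - k))"
  show ?thesis
  proof (rule Bochner_Integration.integrable_bound[where f="\<lambda>x. ?e x + (\<Sum>k<nat (j + 1). ?q k x)"])
    have "integrable (M \<Otimes>\<^sub>M lborel) ?e"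
      using assms by (intro integrable_pair_lborel_mult integrable_norm integrable_inverse_power_vertical) auto
    moreover have "integrable (M \<Otimes>\<^sub>M lborel) (?q k)" if "k < nat (j + 1)" for k
      using that assms integrable_abs_power_le[OF assms(1,3)]
      by (intro integrable_pair_lborel_mult integrable_divide integrable_norm integrable_inverse_power_vertical)
        auto
    ultimately show "integrable (M \<Otimes>\<^sub>M lborel) (\<lambda>x. ?e x + (\<Sum>k<nat (j + 1). ?q k x))"
      by (intro Bochner_Integration.integrable_add Bochner_Integration.integrable_sum) auto
    have "(\<lambda>(x, t). exp_trunc_kernel j p s x t) \<in> borel_measurable (borel \<Otimes>\<^sub>M borel)"
      using borel_measurable_continuous_onI[OF continuous_on_exp_trunc_kernel[OF assms(4)]]
      by (simp add: borel_prod case_prod_beta)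
    then show "(\<lambda>(\<omega>, t). exp_trunc_kernel j p s (X \<omega>) t) \<in> borel_measurable (M \<Otimes>\<^sub>M lborel)"
      by measurable
    have j: "nat (j + 1) \<le> p + 1" using assms by simp
    show "AE x in M \<Otimes>\<^sub>M lborel.
        norm ((\<lambda>(\<omega>, t). exp_trunc_kernel j p s (X \<omega>) t) x) \<le> norm (?e x + (\<Sum>k<nat (j + 1). ?q k x))"
    proof (intro AE_I2)
      fix x :: "'a \<times> real"
      obtain \<omega> t where x: "x = (\<omega>, t)" by (cases x)
      have "norm (exp_trunc_kernel j p s (X \<omega>) t) \<le> ?e x + (\<Sum>k<nat (j + 1). ?q k x)"
        unfolding x using norm_exp_trunc_kernel_le[OF assms(4) j] by simp
      also have "\<dots> \<le> norm (?e x + (\<Sum>k<nat (j + 1). ?q k x))"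
        by simp
      finally show "norm ((\<lambda>(\<omega>, t). exp_trunc_kernel j p s (X \<omega>) t) x)
          \<le> norm (?e x + (\<Sum>k<nat (j + 1). ?q k x))"
        unfolding x by simp
    qed
  qed
qed

lemma integral_exp_trunc_div_power_eq:
  "(\<integral>\<omega>. exp_trunc j (Complex s t * complex_of_real (X \<omega>)) \<partial>M) / (Complex s t) ^ (p + 1)
    = (\<integral>\<omega>. exp_trunc_kernel j p s (X \<omega>) t \<partial>M)"
  unfolding exp_trunc_kernel_def by simp

lemma integral_exp_trunc_div_power_minus:
  "(\<integral>\<omega>. exp_trunc j (Complex s (- t) * complex_of_real (X \<omega>)) \<partial>M) / (Complex s (- t)) ^ (p + 1)
    = cnj ((\<integral>\<omega>. exp_trunc j (Complex s t * complex_of_real (X \<omega>)) \<partial>M) / (Complex s t) ^ (p + 1))"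
  unfolding integral_exp_trunc_div_power_eq by (simp add: exp_trunc_kernel_minus)

lemma (in finite_measure)
  fixes X :: "'a \<Rightarrow> real"
  assumes [measurable]: "X \<in> borel_measurable M"
    and "integrable M (\<lambda>\<omega>. exp (s * X \<omega>))" "integrable M (\<lambda>\<omega>. \<bar>X \<omega>\<bar> ^ p)"
    and "s < 0" "p \<ge> 1" "-1 \<le> j" "j \<le> int p - 1"
  shows integrable_integral_exp_trunc_div_power:
      "integrable lborel (\<lambda>t. (\<integral>\<omega>. exp_trunc j (Complex s t * complex_of_real (X \<omega>)) \<partial>M)
                              / (Complex s t) ^ (p + 1))"
    and lborel_integral_integral_exp_trunc_div_power:
      "(\<integral>t. (\<integral>\<omega>. exp_trunc j (Complex s t * complex_of_real (X \<omega>)) \<partial>M) / (Complex s t) ^ (p + 1) \<partial>lborel)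
        = of_real (2 * pi / fact p * ((\<integral>\<omega>. (max 0 (X \<omega>)) ^ p \<partial>M) - (\<integral>\<omega>. (X \<omega>) ^ p \<partial>M)))"
proof -
  interpret P: pair_sigma_finite M lborel ..
  note pair = integrable_pair_exp_trunc_kernel[OF assms(1-3) _ assms(5,7)]
  show "integrable lborel (\<lambda>t. (\<integral>\<omega>. exp_trunc j (Complex s t * complex_of_real (X \<omega>)) \<partial>M)
                              / (Complex s t) ^ (p + 1))"
    unfolding integral_exp_trunc_div_power_eq using assms(4) by (intro P.integrable_snd pair) simp
  have moments: "integrable M (\<lambda>\<omega>. (max 0 (X \<omega>)) ^ p)" "integrable M (\<lambda>\<omega>. (X \<omega>) ^ p)"
    by (rule Bochner_Integration.integrable_bound[OF assms(3)], auto intro!: AE_I2 power_mono simp: power_abs)+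
  have "(\<integral>t. (\<integral>\<omega>. exp_trunc_kernel j p s (X \<omega>) t \<partial>M) \<partial>lborel)
      = (\<integral>\<omega>. (\<integral>t. exp_trunc_kernel j p s (X \<omega>) t \<partial>lborel) \<partial>M)"
    using assms(4) by (intro P.Fubini_integral pair) simp
  also have "\<dots> = (\<integral>\<omega>. of_real (2 * pi / fact p * ((max 0 (X \<omega>)) ^ p - (X \<omega>) ^ p)) \<partial>M)"
    using integral_exp_trunc_kernel[OF assms(4-7)] by (simp only:)
  also have "\<dots> = of_real (\<integral>\<omega>. 2 * pi / fact p * ((max 0 (X \<omega>)) ^ p - (X \<omega>) ^ p) \<partial>M)"
    by (rule integral_complex_of_real)
  also have "\<dots> = of_real (2 * pi / fact p * ((\<integral>\<omega>. (max 0 (X \<omega>)) ^ p \<partial>M) - (\<integral>\<omega>. (X \<omega>) ^ p \<partial>M)))"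
    by (simp only: integral_mult_right_zero Bochner_Integration.integral_diff[OF moments])
  finally show "(\<integral>t. (\<integral>\<omega>. exp_trunc j (Complex s t * complex_of_real (X \<omega>)) \<partial>M) / (Complex s t) ^ (p + 1) \<partial>lborel)
      = of_real (2 * pi / fact p * ((\<integral>\<omega>. (max 0 (X \<omega>)) ^ p \<partial>M) - (\<integral>\<omega>. (X \<omega>) ^ p \<partial>M)))"
    unfolding integral_exp_trunc_div_power_eq .
qed

theorem corollary2p2:
  fixes M :: "'a measure" and X :: "'a \<Rightarrow> real"
    and s1 s2 s :: real and p :: nat and j :: int
  assumes "prob_space M"
    and "X \<in> borel_measurable M"
    and "s1 \<le> 0" and "0 \<le> s2"
    and "\<forall>u\<in>{s1..s2}. integrable M (\<lambda>\<omega>. exp (u * X \<omega>))"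
    and "p \<ge> 1"
    and "integrable M (\<lambda>\<omega>. \<bar>X \<omega>\<bar> ^ p)"
    and "s1 \<le> s" and "s < 0"
    and "-1 \<le> j" and "j \<le> int p - 1"
  shows
    "(\<forall>t::real. integrable M (\<lambda>\<omega>. exp_trunc j (Complex s t * complex_of_real (X \<omega>))))
     \<and> integrable lborel
         (\<lambda>t::real. (\<integral>\<omega>. exp_trunc j (Complex s t * complex_of_real (X \<omega>)) \<partial>M)
                     / (Complex s t) ^ (p + 1))
     \<and> complex_of_real (\<integral>\<omega>. (max 0 (X \<omega>)) ^ p \<partial>M)
         = complex_of_real (\<integral>\<omega>. (X \<omega>) ^ p \<partial>M)
           + complex_of_real (fact p / (2 * pi))
             * (\<integral>t. (\<integral>\<omega>. exp_trunc j (Complex s t * complex_of_real (X \<omega>)) \<partial>M)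
                     / (Complex s t) ^ (p + 1) \<partial>lborel)
     \<and> set_integrable lborel {0..}
         (\<lambda>t::real. Re ((\<integral>\<omega>. exp_trunc j (Complex s t * complex_of_real (X \<omega>)) \<partial>M)
                     / (Complex s t) ^ (p + 1)))
     \<and> (\<integral>\<omega>. (max 0 (X \<omega>)) ^ p \<partial>M)
         = (\<integral>\<omega>. (X \<omega>) ^ p \<partial>M)
           + fact p / pi
             * (LINT t:{0..}|lborel. Re ((\<integral>\<omega>. exp_trunc j (Complex s t * complex_of_real (X \<omega>)) \<partial>M)
                     / (Complex s t) ^ (p + 1)))"
proof -
  interpret prob_space M by fact
  let ?F = "\<lambda>t. (\<integral>\<omega>. exp_trunc j (Complex s t * complex_of_real (X \<omega>)) \<partial>M) / (Complex s t) ^ (p + 1)"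
  have "integrable M (\<lambda>\<omega>. exp (s * X \<omega>))"
    using assms(4,5,8,9) by auto
  note hyps = this assms(7,9,6,10,11)
  note F = integrable_integral_exp_trunc_div_power[OF assms(2) hyps]
    lborel_integral_integral_exp_trunc_div_power[OF assms(2) hyps]
  have Re_F: "integrable lborel (\<lambda>t. Re (?F t))"
    using F(1) by (rule integrable_Re)
  have even: "Re (?F (- t)) = Re (?F t)" for t
    unfolding integral_exp_trunc_div_power_minus by (rule cnj.sel(1))
  have "(LINT t:{0..}|lborel. Re (?F t)) = Re (\<integral>t. ?F t \<partial>lborel) / 2"
    using lborel_integral_even(2)[OF Re_F even] integral_Re[OF F(1)] by simp
  then have "(LINT t:{0..}|lborel. Re (?F t))
      = pi / fact p * ((\<integral>\<omega>. (max 0 (X \<omega>)) ^ p \<partial>M) - (\<integral>\<omega>. (X \<omega>) ^ p \<partial>M))"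
    unfolding F(2) Re_complex_of_real by simp
  then show ?thesis
    using integrable_exp_trunc[OF assms(2) hyps(1,2)] F lborel_integral_even(1)[OF Re_F even] assms(11)
    by (auto simp flip: of_real_mult of_real_add simp: field_simps)
qed

end
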